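(* Let $\underline A=(A_1,\dots,A_m)\in\mathcal C_k(d)$ with $\Theta_k(\underline A)>0$. For $1\le i\le m$ let $R_i:=\mathrm{Range}(A_i)$ and let $M_i$ be a real $d\times k$ matrix with $M_i^tM_i=I_k$ and $\mathrm{Range}(M_i)=R_i$. Define $C_{i,j}:=M_i^tA_iM_j$ for $1\le i,j\le m$. Then for all $1\le i,j\le m$: (1) $C_{i,j}\in\mathrm{GL}(k,\mathbb R)$; (2) $M_iC_{i,j}=A_iM_j$.
   Context: Fix integers $m,d\ge1$ and $1\le k\le d$. $\mathcal C_k(d)$ is the set of tuples $\underline A=(A_1,\dots,A_m)\in{\rm Mat}(d,\mathbb R)^m$ with $\mathrm{rank}(A_j)=k$ for all $j$. $\Theta_k(\underline A):=\min\{\|\wedge_k(A_aA_b)\|:1\le a,b\le m\}$, where $\wedge_kA$ is the $k$-th exterior power of a matrix $A$ (the matrix of its $k\times k$ minors); thus $\Theta_k(\underline A)>0$ means $\mathrm{rank}(A_aA_b)=k$ for all $a,b$. *)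

theory Defs
  imports "Jordan_Normal_Form.DL_Rank" "Jordan_Normal_Form.DL_Submatrix"
begin

definition rank_real :: "real mat \<Rightarrow> nat" where
  "rank_real A = vec_space.rank (dim_row A) A"

definition mat_range :: "real mat \<Rightarrow> real vec set" where
  "mat_range A = {A *\<^sub>v v | v. v \<in> carrier_vec (dim_col A)}"

(* k-element subsets of {0..<n}: index set of the k-th exterior power *)
definition k_subsets :: "nat \<Rightarrow> nat \<Rightarrow> nat set set" where
  "k_subsets n k = {I. I \<subseteq> {0..<n} \<and> card I = k}"

(* Frobenius norm of the k-th exterior power wedge_k A (matrix of k x k minors,
   rows/columns indexed by k-subsets in increasing order) *)
definition wedge_norm :: "nat \<Rightarrow> real mat \<Rightarrow> real" where
  "wedge_norm k A = sqrt (\<Sum>I\<in>k_subsets (dim_row A) k. \<Sum>J\<in>k_subsets (dim_col A) k.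
       (det (submatrix A I J))\<^sup>2)"

definition C_k :: "nat \<Rightarrow> nat \<Rightarrow> nat \<Rightarrow> (nat \<Rightarrow> real mat) \<Rightarrow> bool" where
  "C_k k d m A \<longleftrightarrow> (\<forall>j\<in>{1..m}. A j \<in> carrier_mat d d \<and> rank_real (A j) = k)"

definition Theta_k :: "nat \<Rightarrow> nat \<Rightarrow> (nat \<Rightarrow> real mat) \<Rightarrow> real" where
  "Theta_k k m A = Min {wedge_norm k (A a * A b) | a b. a \<in> {1..m} \<and> b \<in> {1..m}}"

end

theory Submission
  imports Defs
begin

text \<open>
  Since \<open>M\<^sub>i\<close> is an isometry onto \<open>R\<^sub>i\<close>, the matrix \<open>M\<^sub>i M\<^sub>i\<^sup>t\<close> is the orthogonal projection
  onto \<open>R\<^sub>i\<close> and fixes every matrix whose columns lie in \<open>R\<^sub>i\<close>. Applied to \<open>A\<^sub>i M\<^sub>j\<close> this gives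
  \<open>M\<^sub>i C\<^sub>i\<^sub>,\<^sub>j = A\<^sub>i M\<^sub>j\<close>, and applied to \<open>A\<^sub>i\<close> and \<open>A\<^sub>j\<close> it factors
  \<open>A\<^sub>i A\<^sub>j = M\<^sub>i C\<^sub>i\<^sub>,\<^sub>j (M\<^sub>j\<^sup>t A\<^sub>j)\<close> through the \<open>k \<times> k\<close> matrix \<open>C\<^sub>i\<^sub>,\<^sub>j\<close>. Every \<open>k \<times> k\<close> minor of
  such a product is a product of three \<open>k \<times> k\<close> determinants, one of them \<open>det C\<^sub>i\<^sub>,\<^sub>j\<close>; so if
  \<open>C\<^sub>i\<^sub>,\<^sub>j\<close> were singular, \<open>\<wedge>\<^sub>k(A\<^sub>i A\<^sub>j)\<close> would vanish, contradicting \<open>\<Theta>\<^sub>k > 0\<close>.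
\<close>

lemma det_non_zero_imp_invertible_mat:
  fixes A :: "'a :: field mat"
  assumes A: "A \<in> carrier_mat n n" and "det A \<noteq> 0"
  shows "invertible_mat A"
proof -
  have "A \<in> Units (ring_mat TYPE('a) n undefined)"
    using det_non_zero_imp_unit[OF assms] .
  then obtain B where "B \<in> carrier_mat n n" "B * A = 1\<^sub>m n" "A * B = 1\<^sub>m n"
    unfolding Units_def ring_mat_def by auto
  then show ?thesis
    using A unfolding invertible_mat_def inverts_mat_def by auto
qed

lemma submatrix_UNIV: "submatrix A UNIV UNIV = A"
  by (rule eq_matI) (auto simp: submatrix_def pick_UNIV)

lemma submatrix_mult:
  fixes A B :: "'a :: semiring_0 mat"
  assumes A: "A \<in> carrier_mat n p" and B: "B \<in> carrier_mat p q"
  shows "submatrix (A * B) I J = submatrix A I UNIV * submatrix B UNIV J"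
proof (rule eq_matI)
  fix i j assume "i < dim_row (submatrix A I UNIV * submatrix B UNIV J)"
    and "j < dim_col (submatrix A I UNIV * submatrix B UNIV J)"
  then have i: "i < card {i. i < n \<and> i \<in> I}" and j: "j < card {j. j < q \<and> j \<in> J}"
    using A B by (simp_all add: dim_submatrix)
  have "pick I i < n" "pick J j < q"
    using i j pick_le by fastforce+
  then have "submatrix (A * B) I J $$ (i, j) = (\<Sum>l<p. A $$ (pick I i, l) * B $$ (l, pick J j))"
    using A B i j by (simp add: submatrix_index scalar_prod_def lessThan_atLeast0)
  also have "\<dots> = (submatrix A I UNIV * submatrix B UNIV J) $$ (i, j)"
    using A B i j
    by (simp add: scalar_prod_def dim_submatrix submatrix_index pick_UNIV lessThan_atLeast0)
  finally show "submatrix (A * B) I J $$ (i, j) = (submatrix A I UNIV * submatrix B UNIV J) $$ (i, j)" .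
qed (use A B in \<open>simp_all add: dim_submatrix\<close>)

lemma k_subsets_card_below:
  assumes "I \<in> k_subsets n k"
  shows "card {i. i < n \<and> i \<in> I} = k"
proof -
  have "{i. i < n \<and> i \<in> I} = I"
    using assms unfolding k_subsets_def by auto
  then show ?thesis
    using assms unfolding k_subsets_def by simp
qed

lemma wedge_norm_mult_singular:
  fixes P C X :: "real mat"
  assumes P: "P \<in> carrier_mat n k" and C: "C \<in> carrier_mat k k" and X: "X \<in> carrier_mat k l"
    and singular: "det C = 0"
  shows "wedge_norm k (P * C * X) = 0"
proof -
  have "det (submatrix (P * C * X) I J) = 0"
    if I: "I \<in> k_subsets n k" and J: "J \<in> k_subsets l k" for I J
  proof -
    have PI: "submatrix P I UNIV \<in> carrier_mat k k"
      using P k_subsets_card_below[OF I] by (auto simp: dim_submatrix)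
    have XJ: "submatrix X UNIV J \<in> carrier_mat k k"
      using X k_subsets_card_below[OF J] by (auto simp: dim_submatrix)
    have "submatrix (P * C * X) I J = submatrix P I UNIV * C * submatrix X UNIV J"
      using submatrix_mult[OF mult_carrier_mat[OF P C] X, of I J]
        submatrix_mult[OF P C, of I UNIV] by (simp add: submatrix_UNIV)
    then show ?thesis
      using det_mult[OF mult_carrier_mat[OF PI C] XJ] det_mult[OF PI C] singular by simp
  qed
  then show ?thesis
    using P X unfolding wedge_norm_def by simp
qed

lemma mat_range_mult_subset:
  assumes "B \<in> carrier_mat (dim_col A) q"
  shows "mat_range (A * B) \<subseteq> mat_range A"
proof
  fix x assume "x \<in> mat_range (A * B)"
  then obtain v where v: "v \<in> carrier_vec q" and x: "x = (A * B) *\<^sub>v v"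
    unfolding mat_range_def using assms by auto
  have "x = A *\<^sub>v (B *\<^sub>v v)"
    using x assms v by (simp add: assoc_mult_mat_vec[of _ "dim_row A" "dim_col A"])
  moreover have "B *\<^sub>v v \<in> carrier_vec (dim_col A)"
    using assms v by simp
  ultimately show "x \<in> mat_range A"
    unfolding mat_range_def by blast
qed

lemma isometry_projection_fixes:
  fixes M N :: "real mat"
  assumes M: "M \<in> carrier_mat d k" and isometry: "transpose_mat M * M = 1\<^sub>m k"
    and N: "N \<in> carrier_mat d n" and range: "mat_range N \<subseteq> mat_range M"
  shows "M * (transpose_mat M * N) = N"
proof (rule mat_col_eqI)
  fix l assume l: "l < dim_col N"
  have "col N l = N *\<^sub>v unit_vec n l"
    using l N by (metis carrier_matD(2) col_mult2 col_one one_carrier_mat right_mult_one_mat)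
  then have "col N l \<in> mat_range N"
    unfolding mat_range_def using N l by auto
  with range obtain w where w: "w \<in> carrier_vec k" and col_N: "col N l = M *\<^sub>v w"
    unfolding mat_range_def using M by auto
  have "col (M * (transpose_mat M * N)) l = M *\<^sub>v (transpose_mat M *\<^sub>v col N l)"
    using M N l col_mult2[of M d k "transpose_mat M * N" n l]
      col_mult2[of "transpose_mat M" k d N n l] by simp
  also have "\<dots> = M *\<^sub>v ((transpose_mat M * M) *\<^sub>v w)"
    unfolding col_N using M w by (subst assoc_mult_mat_vec[of _ k d _ k]) auto
  also have "\<dots> = col N l"
    unfolding isometry col_N using w by simp
  finally show "col (M * (transpose_mat M * N)) l = col N l" .
qed (use M N in auto)

lemma compression_invertible_and_intertwining:
  fixes A A' M M' :: "real mat"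
  assumes A: "A \<in> carrier_mat d d" and A': "A' \<in> carrier_mat d d"
    and M: "M \<in> carrier_mat d k" and M': "M' \<in> carrier_mat d k"
    and isometry: "transpose_mat M * M = 1\<^sub>m k" and isometry': "transpose_mat M' * M' = 1\<^sub>m k"
    and range: "mat_range A \<subseteq> mat_range M" and range': "mat_range A' \<subseteq> mat_range M'"
    and wedge: "wedge_norm k (A * A') \<noteq> 0"
  shows "invertible_mat (transpose_mat M * A * M')"
    and "M * (transpose_mat M * A * M') = A * M'"
proof -
  define C where "C = transpose_mat M * A * M'"
  define X where "X = transpose_mat M' * A'"
  have C_carrier: "C \<in> carrier_mat k k" and X_carrier: "X \<in> carrier_mat k d"
    unfolding C_def X_def using M A M' A' by auto
  have "mat_range (A * M') \<subseteq> mat_range M"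
    using mat_range_mult_subset[of M' A] M' A range by auto
  then have "M * (transpose_mat M * (A * M')) = A * M'"
    using isometry_projection_fixes[OF M isometry mult_carrier_mat[OF A M']] by simp
  then show intertwining: "M * C = A * M'"
    unfolding C_def using M A M' by (simp add: assoc_mult_mat[of _ k d _ d _ k])
  have "A' = M' * X"
    unfolding X_def using isometry_projection_fixes[OF M' isometry' A' range'] ..
  then have "A * A' = M * C * X"
    using A M' X_carrier intertwining by (simp add: assoc_mult_mat[of _ d d _ k _ d])
  then have "det C \<noteq> 0"
    using wedge wedge_norm_mult_singular[OF M C_carrier X_carrier] by auto
  then show "invertible_mat C"
    using det_non_zero_imp_invertible_mat[OF C_carrier] by blast
qed

lemma Theta_k_le_wedge_norm:
  assumes "a \<in> {1..m}" and "b \<in> {1..m}"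
  shows "Theta_k k m A \<le> wedge_norm k (A a * A b)"
proof -
  have "{wedge_norm k (A a * A b) | a b. a \<in> {1..m} \<and> b \<in> {1..m}}
      = (\<lambda>(a, b). wedge_norm k (A a * A b)) ` ({1..m} \<times> {1..m})"
    by force
  then show ?thesis
    unfolding Theta_k_def using assms by (simp only:) (rule Min_le, auto)
qed

theorem lemma4p4:
  fixes m d k :: nat and A M :: "nat \<Rightarrow> real mat"
  assumes "1 \<le> m" and "1 \<le> d" and "1 \<le> k" and "k \<le> d"
    and "C_k k d m A"
    and "Theta_k k m A > 0"
    and "\<forall>i\<in>{1..m}. M i \<in> carrier_mat d k \<and> transpose_mat (M i) * M i = 1\<^sub>m k
                      \<and> mat_range (M i) = mat_range (A i)"
  shows "\<forall>i\<in>{1..m}. \<forall>j\<in>{1..m}.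
           transpose_mat (M i) * A i * M j \<in> carrier_mat k k
         \<and> invertible_mat (transpose_mat (M i) * A i * M j)
         \<and> M i * (transpose_mat (M i) * A i * M j) = A i * M j"
proof (intro ballI conjI)
  fix i j assume i: "i \<in> {1..m}" and j: "j \<in> {1..m}"
  have A: "A i \<in> carrier_mat d d" "A j \<in> carrier_mat d d"
    using assms(5) i j unfolding C_k_def by auto
  have M: "M i \<in> carrier_mat d k" "M j \<in> carrier_mat d k"
    and isometry: "transpose_mat (M i) * M i = 1\<^sub>m k" "transpose_mat (M j) * M j = 1\<^sub>m k"
    and range: "mat_range (A i) \<subseteq> mat_range (M i)" "mat_range (A j) \<subseteq> mat_range (M j)"
    using assms(7) i j by auto
  have "wedge_norm k (A i * A j) \<noteq> 0"
    using Theta_k_le_wedge_norm[OF i j, of k A] assms(6) by auto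
  note compression = compression_invertible_and_intertwining[OF A M isometry range this]
  show "transpose_mat (M i) * A i * M j \<in> carrier_mat k k"
    using A M by auto
  show "invertible_mat (transpose_mat (M i) * A i * M j)"
    by (rule compression(1))
  show "M i * (transpose_mat (M i) * A i * M j) = A i * M j"
    by (rule compression(2))
qed

end
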